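(* Let $N,k$ be positive integers with $k<N/2$ (and $k\ge 6$), and for a real $c$ with $N/c$ a positive integer define $$\gamma(N,k,c)=\sum_{m=0}^{\lfloor k/2\rfloor}\binom{N/c}{m}^2\binom{(1-2/c)N}{k-2m}.$$ Then there is an absolute constant $C$ such that $\gamma(N,k,c)/\binom{N}{k}\le C\sqrt{c/k}$ for every such $c$ with $2\le c\le k/3$.
   Context: $\gamma(N,k,c)/\binom{N}{k}$ equals the probability that a balance with $N/c$ coins on each pan is balanced, when the $N/c+N/c$ placed coins are chosen among $N$ coins of which $k$ uniformly random ones are false (all false coins have equal weight). *)

theory Defs
  imports Complex_Main
begin

text \<open>gamma(N,k,c) = sum_{m=0}^{floor(k/2)} binom(N/c, m)^2 binom((1-2/c)N, k-2m).
  Meaningful when N/c is a positive integer n; then (1-2/c)N = N - 2n (a natural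
  number when c \<ge> 2).\<close>
definition gamma :: "nat \<Rightarrow> nat \<Rightarrow> real \<Rightarrow> real" where
  "gamma N k c =
     (let n = nat \<lfloor>real N / c\<rfloor> in
      (\<Sum>m = 0..k div 2. real (n choose m) ^ 2 * real ((N - 2 * n) choose (k - 2 * m))))"

end

theory Submission
  imports Defs
begin

text \<open>The identity \<open>C(n,m)\<^sup>2 C(2n,n) = C(2m,m) C(2j,j) C(2n,2m)\<close> (with \<open>j = n - m\<close>)
  and the central binomial estimates \<open>16\<^sup>m / (4m) \<le> C(2m,m)\<^sup>2 \<le> 16\<^sup>m / (3m + 1)\<close>
  give \<open>C(n,m)\<^sup>2 \<le> C(2n,2m) \<surd>(4/(m+1) + 4/(j+1))\<close>. Splitting the square root by AM-GM
  with weight \<open>l = \<surd>(c/k)\<close>, the factors \<open>1/(m+1)\<close> and \<open>1/(j+1)\<close> are absorbed into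
  \<open>C(2n+1,2m+1)\<close> and \<open>C(2n+1,2m)\<close>. Summing over \<open>m\<close>, partial Vandermonde sums bound
  \<open>\<gamma>(N,k,c)\<close> by \<open>(l/2 + 8(N+1)/(l(2n+1)(k+1))) C(N,k)\<close> with \<open>N = cn\<close>, and both terms are
  \<open>O(\<surd>(c/k))\<close>.\<close>

lemma real_Suc_times_binomial:
  "(real k + 1) * real (Suc n choose Suc k) = (real n + 1) * real (n choose k)"
  using arg_cong[OF Suc_times_binomial[of k n], of real]
  by (simp only: of_nat_mult of_nat_Suc) (simp add: algebra_simps del: binomial_Suc_Suc)

lemma central_binomial_Suc:
  "(real m + 1) * real ((2 * Suc m) choose Suc m) = 2 * (2 * real m + 1) * real ((2 * m) choose m)"
proof -
  have "Suc (2 * m) choose m = Suc (2 * m) choose Suc m"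
    using binomial_symmetric[of m "Suc (2 * m)"] by simp
  then have "(real m + 1) * real ((2 * Suc m) choose Suc m) = 2 * ((real m + 1) * real (Suc (2 * m) choose Suc m))"
    using real_Suc_times_binomial[of m "Suc (2 * m)"] by (simp del: binomial_Suc_Suc)
  also have "\<dots> = 2 * (2 * real m + 1) * real ((2 * m) choose m)"
    using real_Suc_times_binomial[of m "2 * m"] by simp
  finally show ?thesis .
qed

lemma central_binomial_Suc_squared:
  "(real m + 1)^2 * real ((2 * Suc m) choose Suc m)^2 = 4 * (2 * real m + 1)^2 * real ((2 * m) choose m)^2"
  using arg_cong[OF central_binomial_Suc[of m], of "\<lambda>x. x^2"]
  by (simp only: power_mult_distrib) (simp del: binomial_Suc_Suc)

lemma real_binomial_absorb_comp:
  assumes "k \<le> n"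
  shows "(real (n - k) + 1) * real (Suc n choose k) = (real n + 1) * real (n choose k)"
proof -
  have "Suc (n - k) * (Suc n choose k) = Suc n * (n choose k)"
    using binomial_absorb_comp[of "Suc n" k] assms by (simp add: Suc_diff_le)
  then show ?thesis
    by (metis of_nat_Suc of_nat_mult add.commute)
qed

lemma central_binomial_squared_upper: "real ((2 * m) choose m)^2 * (3 * real m + 1) \<le> 16^m"
proof (induction m)
  case 0
  then show ?case by simp
next
  case (Suc m)
  define X where "X = real ((2 * m) choose m)"
  define Y where "Y = real ((2 * Suc m) choose Suc m)"
  have "(real m + 1)^2 * (Y^2 * (3 * real m + 4)) = (4 * (2 * real m + 1)^2 * (3 * real m + 4)) * X^2"
    using central_binomial_Suc_squared[of m] unfolding X_def Y_def by (simp add: algebra_simps)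
  also have "\<dots> \<le> (16 * (real m + 1)^2 * (3 * real m + 1)) * X^2"
    by (intro mult_right_mono) (simp_all add: power2_eq_square algebra_simps)
  also have "\<dots> \<le> 16 * (real m + 1)^2 * 16^m"
    using Suc.IH unfolding X_def by (simp add: mult_ac)
  finally have "(real m + 1)^2 * (Y^2 * (3 * real m + 4)) \<le> (real m + 1)^2 * 16^Suc m"
    by simp
  then have "Y^2 * (3 * real m + 4) \<le> 16^Suc m"
    by (rule mult_left_le_imp_le) simp
  then show ?case
    unfolding Y_def by (simp add: algebra_simps)
qed

lemma central_binomial_squared_lower:
  assumes "1 \<le> n"
  shows "16^n \<le> 4 * real n * real ((2 * n) choose n)^2"
  using assms
proof (induction n rule: dec_induct)
  case base
  then show ?case by simp
next
  case (step m)
  define X where "X = real ((2 * m) choose m)"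
  define Y where "Y = real ((2 * Suc m) choose Suc m)"
  have "(real m + 1) * 16^Suc m = 16 * (real m + 1) * 16^m"
    by simp
  also have "\<dots> \<le> 16 * (real m + 1) * (4 * real m * X^2)"
    using step.IH unfolding X_def by (intro mult_left_mono) simp_all
  also have "\<dots> = (16 * (4 * real m * (real m + 1))) * X^2"
    by (simp add: algebra_simps)
  also have "\<dots> \<le> (16 * (2 * real m + 1)^2) * X^2"
    by (intro mult_right_mono) (simp_all add: power2_eq_square algebra_simps)
  also have "\<dots> = (real m + 1) * (4 * (real m + 1) * Y^2)"
    using central_binomial_Suc_squared[of m] unfolding X_def Y_def by (simp add: power2_eq_square algebra_simps)
  finally have "16^Suc m \<le> 4 * (real m + 1) * Y^2"
    by (rule mult_left_le_imp_le) simp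
  then show ?case
    unfolding Y_def by (simp add: add.commute del: binomial_Suc_Suc)
qed

lemma binomial_squared_times_central_binomial:
  "real ((m + j) choose m)^2 * real ((2 * (m + j)) choose (m + j)) =
   real ((2 * m) choose m) * real ((2 * j) choose j) * real ((2 * (m + j)) choose (2 * m))"
proof -
  have e1: "real ((m + j) choose m) = fact (m + j) / (fact m * fact j)"
    using binomial_fact[of m "m + j", where 'a = real] by simp
  have e2: "real ((2 * (m + j)) choose (m + j)) = fact (2 * (m + j)) / (fact (m + j) * fact (m + j))"
    using binomial_fact[of "m + j" "2 * (m + j)", where 'a = real] by (simp add: mult_2)
  have e3: "real ((2 * m) choose m) = fact (2 * m) / (fact m * fact m)"
    using binomial_fact[of m "2 * m", where 'a = real] by (simp add: mult_2)
  have e4: "real ((2 * j) choose j) = fact (2 * j) / (fact j * fact j)"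
    using binomial_fact[of j "2 * j", where 'a = real] by (simp add: mult_2)
  have e5: "real ((2 * (m + j)) choose (2 * m)) = fact (2 * (m + j)) / (fact (2 * m) * fact (2 * j))"
    using binomial_fact[of "2 * m" "2 * (m + j)", where 'a = real] by simp
  show ?thesis
    unfolding e1 e2 e3 e4 e5 by (simp add: field_simps power2_eq_square)
qed

lemma binomial_squared_squared_le:
  "(real ((m + j) choose m)^2)^2 \<le> (4 / (real m + 1) + 4 / (real j + 1)) * real ((2 * (m + j)) choose (2 * m))^2"
proof (cases "m + j = 0")
  case True
  then show ?thesis by simp
next
  case False
  define n where "n = m + j"
  define b where "b = real (n choose m)^2"
  define A where "A = real ((2 * m) choose m)"
  define B where "B = real ((2 * j) choose j)"
  define D where "D = real ((2 * n) choose n)"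
  define E where "E = real ((2 * n) choose (2 * m))"
  have "b * D = A * B * E"
    unfolding b_def A_def B_def D_def E_def n_def by (rule binomial_squared_times_central_binomial)
  have "b^2 * ((3 * real m + 1) * (3 * real j + 1)) * D^2 = (b * D)^2 * ((3 * real m + 1) * (3 * real j + 1))"
    by (simp add: power_mult_distrib)
  also have "\<dots> = (A * B * E)^2 * ((3 * real m + 1) * (3 * real j + 1))"
    unfolding \<open>b * D = A * B * E\<close> ..
  also have "\<dots> = E^2 * ((A^2 * (3 * real m + 1)) * (B^2 * (3 * real j + 1)))"
    by (simp add: power_mult_distrib)
  also have "\<dots> \<le> E^2 * (16^m * 16^j)"
    unfolding A_def B_def
    by (intro mult_left_mono mult_mono central_binomial_squared_upper) simp_all
  also have "\<dots> \<le> E^2 * (4 * real n * D^2)"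
    using central_binomial_squared_lower[of n] False unfolding D_def n_def
    by (intro mult_left_mono) (simp_all add: power_add)
  finally have "b^2 * ((3 * real m + 1) * (3 * real j + 1)) \<le> 4 * real n * E^2"
    using False unfolding D_def n_def by (simp add: mult_ac)
  also have "\<dots> \<le> ((4 / (real m + 1) + 4 / (real j + 1)) * ((3 * real m + 1) * (3 * real j + 1))) * E^2"
  proof (rule mult_right_mono)
    have "(4 / (real m + 1) + 4 / (real j + 1)) * ((real m + 1) * (real j + 1)) = 4 * (real n + 2)"
      unfolding n_def by (simp add: divide_simps)
    then have "4 * real n \<le> (4 / (real m + 1) + 4 / (real j + 1)) * ((real m + 1) * (real j + 1))"
      by simp
    also have "\<dots> \<le> (4 / (real m + 1) + 4 / (real j + 1)) * ((3 * real m + 1) * (3 * real j + 1))"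
      by (intro mult_left_mono mult_mono) simp_all
    finally show "4 * real n \<le> (4 / (real m + 1) + 4 / (real j + 1)) * ((3 * real m + 1) * (3 * real j + 1))" .
  qed simp
  finally have "b^2 * ((3 * real m + 1) * (3 * real j + 1)) \<le>
      (4 / (real m + 1) + 4 / (real j + 1)) * E^2 * ((3 * real m + 1) * (3 * real j + 1))"
    by (simp only: mult_ac)
  then show ?thesis
    unfolding b_def E_def n_def by (rule mult_right_le_imp_le) simp
qed

lemma le_add_if_square_le_4_mult:
  fixes x a b :: real
  assumes "0 \<le> a" "0 \<le> b" "x^2 \<le> 4 * a * b"
  shows "x \<le> a + b"
proof (rule power2_le_imp_le)
  have "4 * a * b \<le> (a + b)^2"
    using sum_squares_ge_zero[of "a - b" 0] by (simp add: power2_eq_square algebra_simps)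
  then show "x^2 \<le> (a + b)^2"
    using assms(3) by linarith
qed (use assms in simp)

lemma binomial_squared_le:
  fixes l :: real
  assumes "0 < l"
  shows "real (n choose m)^2 \<le> l / 2 * real ((2 * n) choose (2 * m)) +
    4 / (l * (2 * real n + 1)) * (real ((2 * n + 1) choose (2 * m + 1)) + real ((2 * n + 1) choose (2 * m)))"
proof (cases "m \<le> n")
  case False
  then have "n choose m = 0"
    by simp
  then show ?thesis
    using assms by (simp del: binomial_eq_0_iff)
next
  case True
  define j where "j = n - m"
  define q where "q = 4 / (real m + 1) + 4 / (real j + 1)"
  define E where "E = real ((2 * n) choose (2 * m))"
  define E1 where "E1 = real ((2 * n + 1) choose (2 * m + 1))"
  define E0 where "E0 = real ((2 * n + 1) choose (2 * m))"
  have n: "n = m + j"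
    using True unfolding j_def by simp
  have "real (n choose m)^2 \<le> l / 2 * E + q * E / (2 * l)"
  proof (rule le_add_if_square_le_4_mult)
    have "(real (n choose m)^2)^2 \<le> q * E^2"
      using binomial_squared_squared_le[of m j] unfolding q_def E_def n .
    also have "\<dots> = 4 * (l / 2 * E) * (q * E / (2 * l))"
      using assms by (simp add: field_simps power2_eq_square)
    finally show "(real (n choose m)^2)^2 \<le> 4 * (l / 2 * E) * (q * E / (2 * l))" .
  qed (use assms in \<open>simp_all add: q_def E_def\<close>)
  also have "q * E / (2 * l) \<le> 4 / (l * (2 * real n + 1)) * (E1 + E0)"
  proof -
    have "(2 * real m + 1) * E1 = (2 * real n + 1) * E"
      using real_Suc_times_binomial[of "2 * m" "2 * n"] unfolding E1_def E_def by simp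
    then have odd: "E / (real m + 1) \<le> 2 * E1 / (2 * real n + 1)"
      unfolding E1_def by (simp add: field_simps)
    have "(2 * real j + 1) * E0 = (2 * real n + 1) * E"
      using real_binomial_absorb_comp[of "2 * m" "2 * n"] True unfolding E0_def E_def j_def
      by (simp add: of_nat_diff)
    then have even: "E / (real j + 1) \<le> 2 * E0 / (2 * real n + 1)"
      unfolding E0_def by (simp add: field_simps)
    have "q * E / (2 * l) = 2 / l * (E / (real m + 1) + E / (real j + 1))"
      using assms unfolding q_def by (simp add: divide_simps) (simp add: algebra_simps)
    also have "\<dots> \<le> 2 / l * (2 * E1 / (2 * real n + 1) + 2 * E0 / (2 * real n + 1))"
      using odd even assms by (intro mult_left_mono add_mono) simp_all
    also have "\<dots> = 4 / (l * (2 * real n + 1)) * (E1 + E0)"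
      using assms by (simp add: divide_simps)
    finally show ?thesis
      by simp
  qed
  finally show ?thesis
    unfolding E_def E1_def E0_def by simp
qed

lemma sum_binomial_convolution_le:
  assumes "finite S" "inj_on g S" "\<And>m. m \<in> S \<Longrightarrow> g m \<le> K"
  shows "(\<Sum>m\<in>S. real (a choose g m) * real (b choose (K - g m))) \<le> real ((a + b) choose K)"
proof -
  have "(\<Sum>m\<in>S. real (a choose g m) * real (b choose (K - g m))) =
      (\<Sum>s\<in>g ` S. real (a choose s) * real (b choose (K - s)))"
    using sum.reindex[OF assms(2), of "\<lambda>s. real (a choose s) * real (b choose (K - s))"] by simp
  also have "\<dots> \<le> (\<Sum>s\<le>K. real (a choose s) * real (b choose (K - s)))"
    using assms(3) by (intro sum_mono2) auto
  also have "\<dots> = real ((a + b) choose K)"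
    by (simp flip: vandermonde)
  finally show ?thesis .
qed

lemma sum_binomial_squared_le:
  fixes l :: real
  assumes "0 < l" "2 * n \<le> N" "2 * k \<le> N"
  shows "(\<Sum>m = 0..k div 2. real (n choose m)^2 * real ((N - 2 * n) choose (k - 2 * m))) \<le>
    (l / 2 + 8 * (real N + 1) / (l * (2 * real n + 1) * (real k + 1))) * real (N choose k)"
proof -
  define S where "S = {0..k div 2}"
  define r where "r m = real ((N - 2 * n) choose (k - 2 * m))" for m
  define p where "p = 4 / (l * (2 * real n + 1))"
  define B where "B = real (N choose k)"
  have N: "2 * n + (N - 2 * n) = N"
    using assms(2) by simp
  have inj: "inj_on (\<lambda>m. 2 * m) S" "inj_on (\<lambda>m. 2 * m + 1) S"
    by (auto simp: inj_on_def)
  have "(\<Sum>m\<in>S. real (n choose m)^2 * r m) \<le>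
      (\<Sum>m\<in>S. l / 2 * (real ((2 * n) choose (2 * m)) * r m) +
        p * (real ((2 * n + 1) choose (2 * m + 1)) * r m + real ((2 * n + 1) choose (2 * m)) * r m))"
  proof (rule sum_mono)
    fix m
    have "real (n choose m)^2 * r m \<le> (l / 2 * real ((2 * n) choose (2 * m)) +
        p * (real ((2 * n + 1) choose (2 * m + 1)) + real ((2 * n + 1) choose (2 * m)))) * r m"
      unfolding p_def using binomial_squared_le[OF assms(1)] by (intro mult_right_mono) (simp_all add: r_def)
    then show "real (n choose m)^2 * r m \<le> l / 2 * (real ((2 * n) choose (2 * m)) * r m) +
        p * (real ((2 * n + 1) choose (2 * m + 1)) * r m + real ((2 * n + 1) choose (2 * m)) * r m)"
      by (simp add: algebra_simps)
  qed
  also have "\<dots> = l / 2 * (\<Sum>m\<in>S. real ((2 * n) choose (2 * m)) * r m) +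
      p * ((\<Sum>m\<in>S. real ((2 * n + 1) choose (2 * m + 1)) * r m) + (\<Sum>m\<in>S. real ((2 * n + 1) choose (2 * m)) * r m))"
    by (simp only: sum.distrib flip: sum_distrib_left)
  also have "\<dots> \<le> l / 2 * B + p * (real (Suc N choose Suc k) + real (Suc N choose k))"
  proof -
    have "(\<Sum>m\<in>S. real ((2 * n) choose (2 * m)) * r m) \<le> B"
      using sum_binomial_convolution_le[of S "\<lambda>m. 2 * m" k "2 * n" "N - 2 * n"] inj N
      unfolding S_def r_def B_def by auto
    moreover have "(\<Sum>m\<in>S. real ((2 * n + 1) choose (2 * m + 1)) * r m) \<le> real (Suc N choose Suc k)"
      using sum_binomial_convolution_le[of S "\<lambda>m. 2 * m + 1" "k + 1" "2 * n + 1" "N - 2 * n"] inj N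
      unfolding S_def r_def by auto
    moreover have "(\<Sum>m\<in>S. real ((2 * n + 1) choose (2 * m)) * r m) \<le> real (Suc N choose k)"
      using sum_binomial_convolution_le[of S "\<lambda>m. 2 * m" k "2 * n + 1" "N - 2 * n"] inj N
      unfolding S_def r_def by auto
    ultimately show ?thesis
      using assms(1) unfolding p_def by (intro add_mono mult_left_mono) simp_all
  qed
  also have "\<dots> \<le> l / 2 * B + p * (2 * ((real N + 1) / (real k + 1) * B))"
  proof -
    have "(real k + 1) * real (Suc N choose Suc k) = (real N + 1) * B"
      unfolding B_def by (rule real_Suc_times_binomial)
    then have "real (Suc N choose Suc k) = (real N + 1) / (real k + 1) * B"
      by (simp add: field_simps)
    moreover have "real (Suc N choose k) \<le> (real N + 1) / (real k + 1) * B"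
    proof -
      have "real (Suc N choose k) * (real k + 1) \<le> real (Suc N choose k) * (real (N - k) + 1)"
        using assms(3) by (intro mult_left_mono) auto
      also have "\<dots> = (real (N - k) + 1) * real (Suc N choose k)"
        by (rule mult.commute)
      also have "\<dots> = (real N + 1) * B"
        unfolding B_def using assms(3) by (intro real_binomial_absorb_comp) simp
      finally show ?thesis
        by (simp add: field_simps)
    qed
    ultimately have "real (Suc N choose Suc k) + real (Suc N choose k) \<le> 2 * ((real N + 1) / (real k + 1) * B)"
      by linarith
    then show ?thesis
      using assms(1) unfolding p_def by (intro add_left_mono mult_left_mono) simp_all
  qed
  also have "\<dots> = (l / 2 + 8 * (real N + 1) / (l * (2 * real n + 1) * (real k + 1))) * B"
    unfolding p_def by (simp add: field_simps)
  finally show ?thesis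
    unfolding S_def r_def B_def .
qed

lemma sum_binomial_squared_le_sqrt:
  assumes "0 < k" "2 * k \<le> N" "2 \<le> c" "real N = c * real n"
  shows "(\<Sum>m = 0..k div 2. real (n choose m)^2 * real ((N - 2 * n) choose (k - 2 * m))) \<le>
    9 / 2 * sqrt (c / real k) * real (N choose k)"
proof -
  define l where "l = sqrt (c / real k)"
  have l: "0 < l" "l^2 = c / real k"
    using assms unfolding l_def by simp_all
  have "2 * n \<le> N"
    using assms(3,4) mult_right_mono[of 2 c "real n"] by simp
  have "0 \<le> c * real k" "real k \<le> real N"
    using assms by simp_all
  then have "2 * real N * real k + 2 * real k \<le> 2 * real N * real k + 2 * real N + c * real k + c"
    using assms(3) by linarith
  also have "\<dots> = (2 * real N + c) * (real k + 1)"
    by (simp add: algebra_simps)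
  finally have "2 * real N * real k + 2 * real k \<le> (2 * real N + c) * (real k + 1)" .
  then have "8 * (real N + 1) \<le> 4 * l^2 * (2 * real n + 1) * (real k + 1)"
    using assms(1) unfolding l(2) assms(4) by (simp add: field_simps)
  moreover have "0 < l * (2 * real n + 1) * (real k + 1)"
    using l(1) by simp
  ultimately have "8 * (real N + 1) / (l * (2 * real n + 1) * (real k + 1)) \<le> 4 * l"
    by (simp add: pos_divide_le_eq power2_eq_square mult_ac)
  then have "l / 2 + 8 * (real N + 1) / (l * (2 * real n + 1) * (real k + 1)) \<le> 9 / 2 * l"
    by linarith
  then have "(l / 2 + 8 * (real N + 1) / (l * (2 * real n + 1) * (real k + 1))) * real (N choose k) \<le>
      9 / 2 * l * real (N choose k)"
    by (rule mult_right_mono) simp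
  with sum_binomial_squared_le[OF l(1) \<open>2 * n \<le> N\<close> assms(2)] show ?thesis
    unfolding l_def by linarith
qed

theorem lemma4:
  shows "\<exists>C::real. \<forall>(N::nat) (k::nat) (c::real).
     0 < k \<and> 6 \<le> k \<and> 2 * k < N \<and>
     real N / c \<in> \<nat> \<and> real N / c > 0 \<and>
     2 \<le> c \<and> c \<le> real k / 3 \<longrightarrow>
     gamma N k c / real (N choose k) \<le> C * sqrt (c / real k)"
proof (rule exI[of _ 5], intro allI impI)
  fix N k :: nat and c :: real
  assume H: "0 < k \<and> 6 \<le> k \<and> 2 * k < N \<and> real N / c \<in> \<nat> \<and> real N / c > 0 \<and>
    2 \<le> c \<and> c \<le> real k / 3"
  then obtain n where n: "real N / c = real n"
    by (auto elim: Nats_cases)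
  have "real N = c * real n"
    using n H by (simp add: field_simps)
  then have "gamma N k c \<le> 9 / 2 * sqrt (c / real k) * real (N choose k)"
    unfolding gamma_def Let_def n using H by (intro sum_binomial_squared_le_sqrt) simp_all
  also have "\<dots> \<le> 5 * sqrt (c / real k) * real (N choose k)"
    using H by (intro mult_right_mono) simp_all
  finally show "gamma N k c / real (N choose k) \<le> 5 * sqrt (c / real k)"
    using H by (simp add: pos_divide_le_eq)
qed

end
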